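(* Let $n$ be a positive integer and let $A(n)=(a_{ij})_{i,j\in\mathbb{N}}$ be the greedy matrix described in the context. For every $i\geq 1$ there exists $j$ with $1\leq j\leq i$ and $a_{ij}=1$.
   Context: $\mathbb{N}=\{1,2,3,\dots\}$. Fix a positive integer $n$. The infinite $\{0,1\}$-matrix $A(n)=(a_{ij})_{i,j\in\mathbb{N}}$ is defined recursively. Its entries are determined row by row (row $1$ first), and within each row from left to right, so that $a_{kl}$ is determined after all $a_{ij}$ with $i<k$ and all $a_{kj}$ with $j<l$. One sets $a_{kl}=1$ if and only if all of the following hold: (1) $\sum_{j<l}a_{kj}<n+1$; (2) $\sum_{i<k}a_{il}<n+1$; (3) there is no pair $(i,j)$ with $1\le i<k$, $1\le j<l$ and $a_{ij}=a_{il}=a_{kj}=1$. Otherwise $a_{kl}=0$. *)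

theory Defs
  imports Main
begin

text \<open>Indices are 1-based (rows and columns range over
positive naturals); entries at index 0 are irrelevant and set to False.
greedy n k l is True iff a_{kl} = 1. Every entry referenced when determining
a_{kl} has row index at most k and column index at most l, and is not (k,l),
so recursion terminates on k + l.\<close>

function greedy :: "nat \<Rightarrow> nat \<Rightarrow> nat \<Rightarrow> bool" where
  "greedy n k l =
     (if k = 0 \<or> l = 0 then False
      else (\<Sum>j\<in>{1..<l}. if greedy n k j then 1 else 0::nat) < n + 1
         \<and> (\<Sum>i\<in>{1..<k}. if greedy n i l then 1 else 0::nat) < n + 1
         \<and> \<not> (\<exists>i\<in>{1..<k}. \<exists>j\<in>{1..<l}.
                  greedy n i j \<and> greedy n i l \<and> greedy n k j))"
  by auto
termination
  by (relation "measure (\<lambda>(n, k, l). k + l)") auto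

end

theory Submission
  imports Defs
begin

text \<open>Each row and each column of the greedy matrix contains at most \<open>n + 1\<close> ones.
If row \<open>i\<close> had no one in columns \<open>1..i\<close>, then each of these \<open>i\<close> columns would
already be full above row \<open>i\<close>: nothing in row \<open>i\<close> to the left can close a rectangle,
so only condition (2) can have rejected the entry. Counting the ones of the
\<open>(i - 1) \<times> i\<close> block above row \<open>i\<close> by columns gives at least \<open>i (n + 1)\<close>, by rows at most
\<open>(i - 1) (n + 1)\<close>, a contradiction.\<close>

declare greedy.simps [simp del]

lemma greedy_row_prefix_count_le:
  "(\<Sum>j\<in>{1..<l}. if greedy n k j then 1 else 0::nat) \<le> n + 1"
proof (induction l)
  case 0
  then show ?case by simp
next
  case (Suc l)
  show ?case
  proof (cases "l \<ge> 1 \<and> greedy n k l")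
    case True
    then have "(\<Sum>j\<in>{1..<l}. if greedy n k j then 1 else 0::nat) < n + 1"
      using greedy.simps [of n k l] by (auto split: if_splits)
    with True show ?thesis by (simp add: sum.atLeastLessThan_Suc)
  next
    case False
    with Suc.IH show ?thesis by (cases "l = 0") (auto simp add: sum.atLeastLessThan_Suc)
  qed
qed

lemma greedy_column_full_if_row_empty:
  assumes "k \<ge> 1" "l \<ge> 1" and row_empty: "\<forall>j\<in>{1..l}. \<not> greedy n k j"
  shows "n + 1 \<le> (\<Sum>i\<in>{1..<k}. if greedy n i l then 1 else 0::nat)"
proof -
  have "(\<Sum>j\<in>{1..<l}. if greedy n k j then 1 else 0::nat) = 0"
    using row_empty by simp
  moreover have "\<not> (\<exists>i\<in>{1..<k}. \<exists>j\<in>{1..<l}. greedy n i j \<and> greedy n i l \<and> greedy n k j)"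
    using row_empty by auto
  moreover have "\<not> greedy n k l"
    using row_empty \<open>l \<ge> 1\<close> by auto
  ultimately show ?thesis
    using assms(1,2) greedy.simps [of n k l] by (auto simp add: not_less)
qed

theorem lemma3p4:
  fixes n i :: nat
  assumes "n \<ge> 1" and "i \<ge> 1"
  shows "\<exists>j. 1 \<le> j \<and> j \<le> i \<and> greedy n i j"
proof (rule ccontr)
  assume "\<not> (\<exists>j. 1 \<le> j \<and> j \<le> i \<and> greedy n i j)"
  then have row_empty: "\<forall>j\<in>{1..i}. \<not> greedy n i j" by auto
  define a where "a k j = (if greedy n k j then 1 else 0::nat)" for k j
  have "i * (n + 1) = (\<Sum>l\<in>{1..i}. n + 1)" by simp
  also have "\<dots> \<le> (\<Sum>l\<in>{1..i}. \<Sum>k\<in>{1..<i}. a k l)"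
    using greedy_column_full_if_row_empty [of i _ n] \<open>i \<ge> 1\<close> row_empty
    by (intro sum_mono) (auto simp add: a_def)
  also have "\<dots> = (\<Sum>k\<in>{1..<i}. \<Sum>l\<in>{1..<Suc i}. a k l)"
    by (subst sum.swap) (simp add: atLeastLessThanSuc_atLeastAtMost)
  also have "\<dots> \<le> (\<Sum>k\<in>{1..<i}. n + 1)"
    unfolding a_def by (intro sum_mono greedy_row_prefix_count_le)
  also have "\<dots> = (i - 1) * (n + 1)" by simp
  finally show False
    using \<open>i \<ge> 1\<close> by (simp add: algebra_simps)
qed

end
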